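(* In the setting described in the context (genus-zero model, fixed real $t\in(0,1)$ transcendental over $\mathbb F$, fixed parametrization $s\mapsto(x(s),y(s))$), let $\widetilde\gamma_1(s)=\frac{A}{x(s)}-\frac{t\,d_{1,-1}}{y(s)}$ and $\widetilde\gamma_2(s)=\frac{B}{y(s)}-\frac{t\,d_{-1,1}}{x(s)}$. Then the field extensions $\mathbb C(s)/\mathbb C(\widetilde\gamma_1)$ and $\mathbb C(s)/\mathbb C(\widetilde\gamma_2)$ have degree $2$, and the divisors of these functions on $\mathbb P^1$ are \[(\widetilde\gamma_1)=P_1+P_2-0-\infty,\qquad(\widetilde\gamma_2)=P_3+P_4-0-\infty\] for some points $P_1,P_2,P_3,P_4$ of $\mathbb P^1$ distinct from $0$ and $\infty$.
   Context: Let $\mathcal S$ be one of $\mathcal S_1=\{(1,-1),(-1,1),(0,1)\}$, $\mathcal S_2=\{(1,-1),(-1,1),(1,0),(0,1)\}$, $\mathcal S_3=\{(1,-1),(-1,1),(1,1)\}$, $\mathcal S_4=\{(1,-1),(-1,1),(0,1),(1,1)\}$, $\mathcal S_5=\{(1,-1),(-1,1),(1,0),(0,1),(1,1)\}$, with weights $d_{i,j}>0$ for $(i,j)\in\mathcal S$, $d_{i,j}=0$ for $(i,j)\in\{(1,0),(0,1),(1,1)\}\setminus\mathcal S$, and Boltzmann weights $a,b>0$. Let $\mathbb F=\mathbb Q((d_{i,j}),a,b)$, $A=1-1/a$, $B=1-1/b$. Let $K(x,y)=xy\big(1-t(d_{1,-1}\tfrac xy+d_{-1,1}\tfrac yx+d_{1,0}x+d_{0,1}y+d_{1,1}xy)\big)$,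 and let $\overline{E_t}$ be the closure of $\{K=0\}$ in $\mathbb P^1\times\mathbb P^1$. It is known that there is a rational parametrization $\phi:s\mapsto(x(s),y(s))$ from $\mathbb P^1$ onto $\overline{E_t}$ with $x(s),y(s)\in\overline{\mathbb F(t)}(s)$, bijective except that $\phi(0)=\phi(\infty)=([0:1],[0:1])$, and such that the divisors of $x(s)$ and $y(s)$ are $(x)=0+\infty-Q_1-Q_2$ and $(y)=0+\infty-Q_3-Q_4$ for some points $Q_i\notin\{0,\infty\}$; such a $\phi$ is fixed. Divisors of nonzero $h\in\mathbb C(s)$ are $(h)=(h)_0-(h)_\infty$ (zeros minus poles with multiplicities). *)

theory Defs
  imports Complex_Main "HOL-Computational_Algebra.Computational_Algebra"
    "HOL-Computational_Algebra.Normalized_Fraction" "HOL-Computational_Algebra.Field_as_Ring"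
begin

definition is_subfield :: "complex set \<Rightarrow> bool" where
  "is_subfield K \<longleftrightarrow> 0 \<in> K \<and> 1 \<in> K \<and>
     (\<forall>u\<in>K. \<forall>v\<in>K. u + v \<in> K \<and> u - v \<in> K \<and> u * v \<in> K) \<and>
     (\<forall>u\<in>K. u \<noteq> 0 \<longrightarrow> inverse u \<in> K)"

definition gen_field :: "complex set \<Rightarrow> complex set" where
  "gen_field S = \<Inter> {K. is_subfield K \<and> S \<subseteq> K}"

definition algebraic_over :: "complex set \<Rightarrow> complex \<Rightarrow> bool" where
  "algebraic_over K z \<longleftrightarrow> (\<exists>p::complex poly. p \<noteq> 0 \<and> (\<forall>i. coeff p i \<in> K) \<and> poly p z = 0)"

definition transcendental_over :: "complex set \<Rightarrow> complex \<Rightarrow> bool" where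
  "transcendental_over K z \<longleftrightarrow> \<not> algebraic_over K z"

definition alg_closure :: "complex set \<Rightarrow> complex set" where
  "alg_closure K = {z. algebraic_over K z}"

definition step_set :: "nat \<Rightarrow> (int \<times> int) set" where
  "step_set k = (if k = 1 then {(1,-1),(-1,1),(0,1)}
     else if k = 2 then {(1,-1),(-1,1),(1,0),(0,1)}
     else if k = 3 then {(1,-1),(-1,1),(1,1)}
     else if k = 4 then {(1,-1),(-1,1),(0,1),(1,1)}
     else {(1,-1),(-1,1),(1,0),(0,1),(1,1)})"

definition admissible_weights :: "nat \<Rightarrow> (int \<Rightarrow> int \<Rightarrow> real) \<Rightarrow> bool" where
  "admissible_weights k d \<longleftrightarrow> k \<in> {1..5} \<and>
     (\<forall>(i,j)\<in>step_set k. d i j > 0) \<and>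
     (\<forall>(i,j)\<in>{(1,0),(0,1),(1,1)} - step_set k. d i j = 0)"

definition base_field :: "nat \<Rightarrow> (int \<Rightarrow> int \<Rightarrow> real) \<Rightarrow> real \<Rightarrow> real \<Rightarrow> complex set" where
  "base_field k d a b =
     gen_field ((\<lambda>(i,j). complex_of_real (d i j)) ` step_set k \<union> {complex_of_real a, complex_of_real b})"

text \<open>Points of P^1 are represented as complex option: None is infinity = [1:0],
  Some z is [z:1].  The closure of the curve {K = 0} in P^1 x P^1 is the zero set of the
  bihomogenisation of K(x,y) = x y - t (d_{1,-1} x^2 + d_{-1,1} y^2 + d_{1,0} x^2 y
  + d_{0,1} x y^2 + d_{1,1} x^2 y^2) (the bihomogenisation has no component at infinity).\<close>
definition Kpoly :: "real \<Rightarrow> (int \<Rightarrow> int \<Rightarrow> real) \<Rightarrow> complex \<Rightarrow> complex \<Rightarrow> complex" where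
  "Kpoly t d x y = x * y - complex_of_real t * (of_real (d 1 (-1)) * x^2 + of_real (d (-1) 1) * y^2
      + of_real (d 1 0) * x^2 * y + of_real (d 0 1) * x * y^2 + of_real (d 1 1) * x^2 * y^2)"

definition Et_closure :: "real \<Rightarrow> (int \<Rightarrow> int \<Rightarrow> real) \<Rightarrow> (complex option \<times> complex option) set" where
  "Et_closure t d = {(X, Y). (case (X, Y) of
       (Some x, Some y) \<Rightarrow> Kpoly t d x y = 0
     | (None, Some y) \<Rightarrow> - complex_of_real t * (of_real (d 1 (-1)) + of_real (d 1 0) * y + of_real (d 1 1) * y^2) = 0
     | (Some x, None) \<Rightarrow> - complex_of_real t * (of_real (d (-1) 1) + of_real (d 0 1) * x + of_real (d 1 1) * x^2) = 0
     | (None, None) \<Rightarrow> - complex_of_real t * of_real (d 1 1) = 0)}"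

type_synonym ratfun = "complex poly fract"

definition rconst :: "complex \<Rightarrow> ratfun" where
  "rconst c = Fract [:c:] 1"

definition rf_eval :: "ratfun \<Rightarrow> complex option \<Rightarrow> complex option" where
  "rf_eval f P = (let (p, q) = quot_of_fract f in
     (case P of
        Some z \<Rightarrow> (if poly q z \<noteq> 0 then Some (poly p z / poly q z) else None)
      | None \<Rightarrow> (if degree p > degree q then None
                 else if degree p = degree q then Some (lead_coeff p / lead_coeff q)
                 else Some 0)))"

definition rf_ord :: "ratfun \<Rightarrow> complex option \<Rightarrow> int" where
  "rf_ord f P = (let (p, q) = quot_of_fract f in
     (case P of
        Some z \<Rightarrow> int (order z p) - int (order z q)
      | None \<Rightarrow> int (degree q) - int (degree p)))"

definition divisor :: "ratfun \<Rightarrow> complex option \<Rightarrow> int" where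
  "divisor f = rf_ord f"

definition pt :: "complex option \<Rightarrow> complex option \<Rightarrow> int" where
  "pt P = (\<lambda>X. if X = P then 1 else 0)"

definition rf_poly_comp :: "complex poly \<Rightarrow> ratfun \<Rightarrow> ratfun" where
  "rf_poly_comp r f = (\<Sum>i\<le>degree r. rconst (coeff r i) * f ^ i)"

definition gen_subfield :: "ratfun \<Rightarrow> ratfun set" where
  "gen_subfield f = {rf_poly_comp P f / rf_poly_comp Q f | P Q. rf_poly_comp Q f \<noteq> 0}"

definition ext_degree :: "ratfun set \<Rightarrow> nat \<Rightarrow> bool" where
  "ext_degree K n \<longleftrightarrow> (\<exists>bs. length bs = n \<and>
     (\<forall>v. \<exists>!cs. length cs = n \<and> set cs \<subseteq> K \<and> v = (\<Sum>i<n. cs ! i * bs ! i)))"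

definition coeffs_in :: "complex set \<Rightarrow> ratfun \<Rightarrow> bool" where
  "coeffs_in K f \<longleftrightarrow> (\<exists>p q. q \<noteq> 0 \<and> (\<forall>i. coeff p i \<in> K) \<and> (\<forall>i. coeff q i \<in> K) \<and> f = Fract p q)"

end

theory Submission
  imports Defs
begin

text \<open>The divisor conditions force x = c s / qx(s) and y = c' s / qy(s) with quadratic qx, qy not
  vanishing at 0, so the first function is N(s) / (c c' s) with N = A c' qx - t d(1,-1) c qy of degree
  at most 2. At s = 0 and at s = \<infinity> the parametrization passes through the node (0,0) of the curve
  in a direction (u : v) with u v = t (d(1,-1) u^2 + d(-1,1) v^2). If N(0) or the s^2-coefficient of N
  vanished, that direction would also satisfy A v = t d(1,-1) u, and then
  A - A^2 = t^2 d(1,-1) d(-1,1), an algebraic equation for t over F. So N is quadratic with N(0) \<noteq> 0,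
  which gives the divisor, and s satisfies a quadratic equation over the field generated by
  N / (c c' s) without lying in it. Exchanging x and y gives the second function.\<close>

lemma rconst_conv_to_fract: "rconst c = to_fract [:c:]"
  by (simp add: rconst_def to_fract_def)

lemma rconst_add: "rconst (a + b) = rconst a + rconst b"
  by (simp add: rconst_conv_to_fract flip: to_fract_add)

lemma rconst_mult: "rconst (a * b) = rconst a * rconst b"
  by (simp add: rconst_conv_to_fract flip: to_fract_mult)

lemma rconst_1 [simp]: "rconst 1 = 1"
  by (simp add: rconst_conv_to_fract one_pCons[symmetric])

lemma rconst_eq_0_iff [simp]: "rconst a = 0 \<longleftrightarrow> a = 0"
  by (simp add: rconst_conv_to_fract)

lemma rconst_uminus: "rconst (- a) = - rconst a"
  by (simp add: rconst_conv_to_fract flip: to_fract_uminus)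

lemma rf_poly_comp_conv_poly: "rf_poly_comp P f = poly (map_poly rconst P) f"
proof -
  have "degree (map_poly rconst P) = degree P"
    by (rule degree_map_poly) simp
  then show ?thesis
    by (simp add: rf_poly_comp_def poly_altdef coeff_map_poly)
qed

lemma rf_poly_comp_add: "rf_poly_comp (P + Q) f = rf_poly_comp P f + rf_poly_comp Q f"
proof -
  have "map_poly rconst (P + Q) = map_poly rconst P + map_poly rconst Q"
    by (rule poly_eqI) (simp add: coeff_map_poly rconst_add)
  then show ?thesis by (simp add: rf_poly_comp_conv_poly)
qed

lemma rf_poly_comp_smult: "rf_poly_comp (smult c P) f = rconst c * rf_poly_comp P f"
  by (simp add: rf_poly_comp_conv_poly map_poly_smult rconst_mult)

lemma rf_poly_comp_pCons: "rf_poly_comp (pCons a P) f = rconst a + f * rf_poly_comp P f"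
  by (simp add: rf_poly_comp_conv_poly map_poly_pCons)

lemma rf_poly_comp_0 [simp]: "rf_poly_comp 0 f = 0"
  by (simp add: rf_poly_comp_conv_poly)

lemma rf_poly_comp_const [simp]: "rf_poly_comp [:c:] f = rconst c"
  by (simp add: rf_poly_comp_pCons)

lemma rf_poly_comp_1 [simp]: "rf_poly_comp 1 f = 1"
  by (simp add: one_pCons)

lemma rf_poly_comp_X [simp]: "rf_poly_comp [:0, 1:] f = f"
  by (simp add: rf_poly_comp_pCons)

lemma rf_poly_comp_mult: "rf_poly_comp (P * Q) f = rf_poly_comp P f * rf_poly_comp Q f"
  by (induction P) (simp_all add: rf_poly_comp_add rf_poly_comp_smult rf_poly_comp_pCons algebra_simps)

definition rf_X :: ratfun where
  "rf_X = to_fract [:0, 1:]"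

lemma rf_X_nonzero [simp]: "rf_X \<noteq> 0"
  by (simp add: rf_X_def)

lemma to_fract_pCons: "to_fract (pCons a p) = rconst a + rf_X * to_fract p"
proof -
  have "pCons a p = [:a:] + [:0, 1:] * p"
    by (simp add: poly_eq_iff coeff_pCons split: nat.splits)
  then show ?thesis
    by (simp only: to_fract_add to_fract_mult rf_X_def rconst_conv_to_fract)
qed

lemma to_fract_conv_rf_poly_comp: "to_fract p = rf_poly_comp p rf_X"
  by (induction p) (simp_all add: to_fract_pCons rf_poly_comp_pCons)

lemma to_fract_smult: "to_fract (smult a p) = rconst a * to_fract p"
  by (simp add: to_fract_conv_rf_poly_comp rf_poly_comp_smult)

lemma to_fract_monom_1: "to_fract [:0, a:] = rconst a * rf_X"
  using to_fract_smult[of a "[:0, 1:]"] by (simp add: rf_X_def)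

lemma to_fract_power: "to_fract (p ^ n) = to_fract p ^ n"
  by (induction n) simp_all

section \<open>Quadratic extensions of subfields\<close>

locale subfield =
  fixes K :: "'a::field set"
  assumes zero_mem [simp]: "0 \<in> K" and one_mem [simp]: "1 \<in> K"
    and add_mem: "u \<in> K \<Longrightarrow> v \<in> K \<Longrightarrow> u + v \<in> K"
    and uminus_mem: "u \<in> K \<Longrightarrow> - u \<in> K"
    and mult_mem: "u \<in> K \<Longrightarrow> v \<in> K \<Longrightarrow> u * v \<in> K"
    and inverse_mem: "u \<in> K \<Longrightarrow> inverse u \<in> K"
begin

lemma diff_mem: "u \<in> K \<Longrightarrow> v \<in> K \<Longrightarrow> u - v \<in> K"
  using add_mem[of u "- v"] uminus_mem[of v] by simp

lemma divide_mem: "u \<in> K \<Longrightarrow> v \<in> K \<Longrightarrow> u / v \<in> K"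
  using mult_mem[of u "inverse v"] inverse_mem[of v] by (simp add: divide_inverse)

end

lemma subfield_gen_subfield: "subfield (gen_subfield f)"
proof
  let ?c = "\<lambda>P. rf_poly_comp P f"
  have mem: "?c P / ?c Q \<in> gen_subfield f" if "?c Q \<noteq> 0" for P Q
    using that unfolding gen_subfield_def by blast
  have elim: "(\<And>P Q. u = ?c P / ?c Q \<Longrightarrow> ?c Q \<noteq> 0 \<Longrightarrow> thesis) \<Longrightarrow> thesis"
    if "u \<in> gen_subfield f" for u thesis
    using that unfolding gen_subfield_def by blast
  show "0 \<in> gen_subfield f" "1 \<in> gen_subfield f"
    using mem[of 1 0] mem[of 1 1] by simp_all
  fix u v
  assume u: "u \<in> gen_subfield f"
  show "- u \<in> gen_subfield f"
  proof (rule elim[OF u])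
    fix P Q assume "u = ?c P / ?c Q" "?c Q \<noteq> 0"
    moreover have "?c (smult (- 1) P) = - ?c P"
      by (simp only: rf_poly_comp_smult rconst_uminus rconst_1) simp
    ultimately show ?thesis
      using mem[of Q "smult (- 1) P"] by simp
  qed
  show "inverse u \<in> gen_subfield f"
  proof (rule elim[OF u])
    fix P Q assume "u = ?c P / ?c Q" "?c Q \<noteq> 0"
    then show ?thesis
      using mem[of P Q] mem[of 1 0] by (cases "?c P = 0") simp_all
  qed
  assume v: "v \<in> gen_subfield f"
  show "u + v \<in> gen_subfield f"
  proof (rule elim[OF u], rule elim[OF v])
    fix P Q P' Q'
    assume "u = ?c P / ?c Q" "?c Q \<noteq> 0" "v = ?c P' / ?c Q'" "?c Q' \<noteq> 0"
    then show ?thesis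
      using mem[of "Q * Q'" "P * Q' + P' * Q"]
      by (simp add: add_frac_eq rf_poly_comp_add rf_poly_comp_mult)
  qed
  show "u * v \<in> gen_subfield f"
  proof (rule elim[OF u], rule elim[OF v])
    fix P Q P' Q'
    assume "u = ?c P / ?c Q" "?c Q \<noteq> 0" "v = ?c P' / ?c Q'" "?c Q' \<noteq> 0"
    then show ?thesis
      using mem[of "Q * Q'" "P * P'"] by (simp add: rf_poly_comp_mult)
  qed
qed

lemma rconst_mem_gen_subfield: "rconst c \<in> gen_subfield f"
  unfolding gen_subfield_def by (rule CollectI, rule exI[of _ "[:c:]"], rule exI[of _ 1]) simp

lemma self_mem_gen_subfield: "f \<in> gen_subfield f"
  unfolding gen_subfield_def by (rule CollectI, rule exI[of _ "[:0, 1:]"], rule exI[of _ 1]) simp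

lemma subfield_eq_UNIV_if_rconst_rf_X:
  fixes K :: "ratfun set"
  assumes "subfield K" "range rconst \<subseteq> K" "rf_X \<in> K"
  shows "K = UNIV"
proof -
  interpret subfield K by (fact assms(1))
  have poly_mem: "to_fract p \<in> K" for p
    by (induction p) (use assms(2,3) in \<open>auto simp: to_fract_pCons intro: add_mem mult_mem\<close>)
  have "v \<in> K" for v
    by (cases v) (simp add: Fract_conv_to_fract divide_mem poly_mem)
  then show ?thesis by blast
qed

locale quadratic_extension = subfield K for K :: "'a::field set" +
  fixes S \<alpha> \<beta> :: 'a
  assumes S_notin: "S \<notin> K" and S_quadratic: "S * S = \<alpha> * S + \<beta>"
    and \<alpha>_mem: "\<alpha> \<in> K" and \<beta>_mem: "\<beta> \<in> K"
begin

definition adjoin :: "'a set" where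
  "adjoin = {c0 + c1 * S | c0 c1. c0 \<in> K \<and> c1 \<in> K}"

lemma adjoinI: "c0 \<in> K \<Longrightarrow> c1 \<in> K \<Longrightarrow> c0 + c1 * S \<in> adjoin"
  unfolding adjoin_def by blast

lemma adjoinE:
  assumes "u \<in> adjoin"
  obtains c0 c1 where "c0 \<in> K" "c1 \<in> K" "u = c0 + c1 * S"
  using assms unfolding adjoin_def by blast

lemma independent_1_S:
  assumes "c0 \<in> K" "c1 \<in> K" "c0 + c1 * S = 0"
  shows "c0 = 0" "c1 = 0"
proof -
  show "c1 = 0"
  proof (rule ccontr)
    assume "c1 \<noteq> 0"
    then have "S = - c0 / c1"
      using assms(3) by (simp add: field_simps add_eq_0_iff)
    then show False
      using S_notin assms(1,2) by (simp add: divide_mem uminus_mem)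
  qed
  then show "c0 = 0" using assms(3) by simp
qed

lemma adjoin_coeffs_unique:
  assumes "c0 \<in> K" "c1 \<in> K" "d0 \<in> K" "d1 \<in> K" "c0 + c1 * S = d0 + d1 * S"
  shows "c0 = d0 \<and> c1 = d1"
  using independent_1_S[of "c0 - d0" "c1 - d1"] assms by (simp add: diff_mem algebra_simps)

lemma inverse_mem_adjoin:
  assumes "u \<in> adjoin"
  shows "inverse u \<in> adjoin"
proof -
  obtain c0 c1 where c: "c0 \<in> K" "c1 \<in> K" and u: "u = c0 + c1 * S"
    using assms by (rule adjoinE)
  \<comment> \<open>u' is the conjugate of u, and u u' = M is its norm\<close>
  define u' where "u' = (c0 + c1 * \<alpha>) + (- c1) * S"
  define M where "M = c0 * c0 + c0 * c1 * \<alpha> - c1 * c1 * \<beta>"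
  have u'_coeffs: "c0 + c1 * \<alpha> \<in> K" "- c1 \<in> K"
    using c \<alpha>_mem by (simp_all add: add_mem mult_mem uminus_mem)
  have M_mem: "M \<in> K"
    unfolding M_def using c \<alpha>_mem \<beta>_mem by (simp add: add_mem diff_mem mult_mem)
  have "u * u' = c0 * c0 + c0 * c1 * \<alpha> + c1 * c1 * (\<alpha> * S - S * S)"
    unfolding u u'_def by (simp add: algebra_simps)
  then have norm: "u * u' = M"
    unfolding S_quadratic M_def by (simp add: algebra_simps)
  consider "u = 0" | "M \<noteq> 0" | "u \<noteq> 0" "M = 0" by blast
  then show ?thesis
  proof cases
    case 1
    then show ?thesis using adjoinI[of 0 0] by simp
  next
    case 2
    then have "u \<noteq> 0" using norm by auto
    then have "inverse u = u' / M"
      using norm 2 by (simp add: field_simps)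
    also have "\<dots> = (c0 + c1 * \<alpha>) / M + (- c1 / M) * S"
      by (simp add: u'_def add_divide_distrib diff_divide_distrib)
    also have "\<dots> \<in> adjoin"
      by (intro adjoinI divide_mem u'_coeffs M_mem)
    finally show ?thesis .
  next
    case 3
    then have "u' = 0" using norm by simp
    then have "c1 = 0"
      using independent_1_S[OF u'_coeffs] by (simp add: u'_def)
    then have "u = 0"
      using \<open>u' = 0\<close> by (simp add: u u'_def)
    then show ?thesis using \<open>u \<noteq> 0\<close> by simp
  qed
qed

lemma subfield_adjoin: "subfield adjoin"
proof
  show "0 \<in> adjoin" "1 \<in> adjoin"
    using adjoinI[of 0 0] adjoinI[of 1 0] by simp_all
  fix u v
  assume u: "u \<in> adjoin"
  then obtain c0 c1 where c: "c0 \<in> K" "c1 \<in> K" "u = c0 + c1 * S"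
    by (rule adjoinE)
  show "inverse u \<in> adjoin" using u by (rule inverse_mem_adjoin)
  show "- u \<in> adjoin"
    using adjoinI[of "- c0" "- c1"] c by (simp add: uminus_mem)
  assume "v \<in> adjoin"
  then obtain d0 d1 where d: "d0 \<in> K" "d1 \<in> K" "v = d0 + d1 * S"
    by (rule adjoinE)
  show "u + v \<in> adjoin"
    using adjoinI[of "c0 + d0" "c1 + d1"] c d by (simp add: add_mem algebra_simps)
  have "u * v = c0 * d0 + (c0 * d1 + c1 * d0) * S + c1 * d1 * (S * S)"
    unfolding c(3) d(3) by (simp add: algebra_simps)
  also have "\<dots> = (c0 * d0 + c1 * d1 * \<beta>) + (c0 * d1 + c1 * d0 + c1 * d1 * \<alpha>) * S"
    unfolding S_quadratic by (simp add: algebra_simps)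
  finally show "u * v \<in> adjoin"
    using c d \<alpha>_mem \<beta>_mem by (simp add: adjoinI add_mem mult_mem)
qed

end

lemma ext_degree_2I:
  assumes "quadratic_extension K rf_X \<alpha> \<beta>" and "range rconst \<subseteq> K"
  shows "ext_degree K 2"
proof -
  interpret quadratic_extension K rf_X \<alpha> \<beta> by (fact assms(1))
  have "adjoin = UNIV"
  proof (rule subfield_eq_UNIV_if_rconst_rf_X[OF subfield_adjoin])
    show "range rconst \<subseteq> adjoin"
      using assms(2) adjoinI[of _ 0] by auto
    show "rf_X \<in> adjoin" using adjoinI[of 0 1] by simp
  qed
  have two: "(\<Sum>i<2. cs ! i * [1, rf_X] ! i) = cs ! 0 + cs ! 1 * rf_X" for cs
    by (simp add: numeral_2_eq_2)
  show ?thesis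
    unfolding ext_degree_def
  proof (intro exI[of _ "[1, rf_X]"] conjI allI)
    fix v
    obtain c0 c1 where c: "c0 \<in> K" "c1 \<in> K" "v = c0 + c1 * rf_X"
      using \<open>adjoin = UNIV\<close> adjoinE by blast
    show "\<exists>!cs. length cs = 2 \<and> set cs \<subseteq> K \<and> v = (\<Sum>i<2. cs ! i * [1, rf_X] ! i)"
    proof (rule ex1I[of _ "[c0, c1]"])
      fix cs
      assume cs: "length cs = 2 \<and> set cs \<subseteq> K \<and> v = (\<Sum>i<2. cs ! i * [1, rf_X] ! i)"
      then obtain e0 e1 where "cs = [e0, e1]"
        by (auto simp: numeral_2_eq_2 length_Suc_conv)
      with cs c show "cs = [c0, c1]"
        using adjoin_coeffs_unique[of e0 e1 c0 c1] by (simp add: two)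
    qed (use c in \<open>simp add: two\<close>)
  qed simp
qed


section \<open>Functions with simple poles at 0 and infinity\<close>

lemma rf_ord_Fract:
  assumes "p \<noteq> 0" "q \<noteq> 0"
  shows "rf_ord (Fract p q) (Some z) = int (order z p) - int (order z q)"
    and "rf_ord (Fract p q) None = int (degree q) - int (degree p)"
proof -
  obtain p' q' where pq': "quot_of_fract (Fract p q) = (p', q')"
    by (cases "quot_of_fract (Fract p q)")
  have q': "q' \<noteq> 0"
    using snd_quot_of_fract_nonzero[of "Fract p q"] pq' by simp
  have "Fract p' q' = Fract p q"
    using Fract_quot_of_fract[of "Fract p q"] pq' by simp
  then have cross: "p' * q = p * q'"
    using q' assms eq_fract(1) by metis
  have p': "p' \<noteq> 0"
    using cross assms q' by auto
  have "order z p' + order z q = order z p + order z q'"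
    using arg_cong[OF cross, of "order z"] p' q' assms by (simp add: order_mult)
  then show "rf_ord (Fract p q) (Some z) = int (order z p) - int (order z q)"
    unfolding rf_ord_def pq' by simp
  have "degree p' + degree q = degree p + degree q'"
    using arg_cong[OF cross, of degree] p' q' assms by (simp add: degree_mult_eq)
  then show "rf_ord (Fract p q) None = int (degree q) - int (degree p)"
    unfolding rf_ord_def pq' by simp
qed

lemma order_linear_factor: "order z [:- r, 1:] = (if z = r then 1 else 0)"
  using order_power_n_n[of r 1] by (auto intro: order_0I)

lemma order_degree_mult_power_monom_1:
  fixes H :: "'a::idom poly"
  assumes "poly H 0 \<noteq> 0" "\<kappa> \<noteq> 0"
  shows "order 0 (H * [:0, \<kappa>:] ^ m) = m" and "degree (H * [:0, \<kappa>:] ^ m) = degree H + m"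
proof -
  have D: "[:0, \<kappa>:] ^ m = smult (\<kappa> ^ m) ([:- 0, 1:] ^ m)"
    by (simp add: smult_power[symmetric])
  have X: "order 0 ([:0, 1:] ^ m :: 'a poly) = m"
    using order_power_n_n[of 0 m] by simp
  have "H \<noteq> 0" using assms(1) by auto
  then show "order 0 (H * [:0, \<kappa>:] ^ m) = m"
    using assms by (simp add: D X order_mult order_smult order_0I)
  show "degree (H * [:0, \<kappa>:] ^ m) = degree H + m"
    using \<open>H \<noteq> 0\<close> assms(2) by (simp add: degree_mult_eq degree_power_eq)
qed

definition degree_2_poles_0_inf :: "ratfun \<Rightarrow> bool" where
  "degree_2_poles_0_inf g \<longleftrightarrow> g \<noteq> 0 \<and> ext_degree (gen_subfield g) 2 \<and>
     (\<exists>P1 P2. P1 \<notin> {Some 0, None} \<and> P2 \<notin> {Some 0, None} \<and>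
        divisor g = (\<lambda>P. pt P1 P + pt P2 P - pt (Some 0) P - pt None P))"

locale simple_poles_at_0_and_inf =
  fixes N :: "complex poly" and \<kappa> :: complex
  assumes degree_N: "degree N = 2" and N_0: "poly N 0 \<noteq> 0" and \<kappa>_nonzero: "\<kappa> \<noteq> 0"
begin

definition g :: ratfun where
  "g = to_fract N / to_fract [:0, \<kappa>:]"

lemma N_nonzero: "N \<noteq> 0"
  using degree_N by auto

lemma g_nonzero: "g \<noteq> 0"
  using N_nonzero \<kappa>_nonzero by (simp add: g_def)

lemma divisor_g:
  "\<exists>P1 P2. P1 \<notin> {Some 0, None} \<and> P2 \<notin> {Some 0, None} \<and>
     divisor g = (\<lambda>P. pt P1 P + pt P2 P - pt (Some 0) P - pt None P)"
proof -
  obtain r where "smult (lead_coeff N) (\<Prod>i<degree N. [:- r i, 1:]) = N"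
    by (rule complex_poly_decompose')
  then have N: "N = smult (lead_coeff N) ([:- r 0, 1:] * [:- r 1, 1:])"
    by (simp add: degree_N numeral_2_eq_2)
  have roots_nonzero: "r 0 \<noteq> 0" "r 1 \<noteq> 0"
    using N_0 by (subst (asm) N; auto)+
  have lc: "lead_coeff N \<noteq> 0" and factors: "[:- r 0, 1:] * [:- r 1, 1:] \<noteq> 0"
    using N_nonzero by (simp, metis pCons_eq_0_iff mult_eq_0_iff one_neq_zero)
  have order_N: "order z N = order z [:- r 0, 1:] + order z [:- r 1, 1:]" for z
    by (subst N) (simp only: order_smult[OF lc] order_mult[OF factors])
  have order_D: "order z [:0, \<kappa>:] = (if z = 0 then 1 else 0)" for z
    using order_smult[OF \<kappa>_nonzero, of z "[:- 0, 1:]"] order_linear_factor[of z 0] by simp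
  have "divisor g = (\<lambda>P. pt (Some (r 0)) P + pt (Some (r 1)) P - pt (Some 0) P - pt None P)"
  proof
    fix P
    show "divisor g P = pt (Some (r 0)) P + pt (Some (r 1)) P - pt (Some 0) P - pt None P"
      using rf_ord_Fract[OF N_nonzero, of "[:0, \<kappa>:]"] \<kappa>_nonzero degree_N roots_nonzero
      by (cases P) (simp_all add: divisor_def g_def pt_def order_N order_D order_linear_factor
          Fract_conv_to_fract)
  qed
  then show ?thesis
    using roots_nonzero by blast
qed

lemma rf_poly_comp_g:
  assumes "P \<noteq> 0"
  shows "\<exists>H. rf_poly_comp P g = to_fract H / to_fract ([:0, \<kappa>:] ^ degree P) \<and>
    poly H 0 \<noteq> 0 \<and> degree H = 2 * degree P"
  using assms
proof (induction P)
  case (pCons a P)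
  show ?case
  proof (cases "P = 0")
    case True
    then show ?thesis
      using pCons.hyps by (intro exI[of _ "[:a:]"]) (simp add: rconst_conv_to_fract)
  next
    case False
    then obtain H where H: "rf_poly_comp P g = to_fract H / to_fract ([:0, \<kappa>:] ^ degree P)"
      "poly H 0 \<noteq> 0" "degree H = 2 * degree P"
      using pCons.IH by blast
    define m where "m = degree P"
    define D where "D = [:0, \<kappa>:]"
    define H' where "H' = smult a (D ^ Suc m) + N * H"
    have "to_fract D \<noteq> 0"
      using \<kappa>_nonzero by (simp add: D_def)
    have "rf_poly_comp (pCons a P) g = rconst a + to_fract N / to_fract D * (to_fract H / to_fract D ^ m)"
      using H(1) by (simp add: rf_poly_comp_pCons g_def to_fract_power m_def D_def)
    also have "\<dots> = to_fract H' / to_fract (D ^ Suc m)"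
      using \<open>to_fract D \<noteq> 0\<close> by (simp add: H'_def to_fract_smult to_fract_power field_simps)
    finally have "rf_poly_comp (pCons a P) g = to_fract H' / to_fract ([:0, \<kappa>:] ^ Suc m)"
      by (simp only: D_def)
    moreover have "poly H' 0 \<noteq> 0"
      using N_0 H(2) by (simp add: H'_def D_def)
    moreover have "degree H' = 2 * Suc m"
    proof -
      have "degree (smult a (D ^ Suc m)) \<le> degree (D ^ Suc m)"
        by (rule degree_smult_le)
      also have "\<dots> \<le> degree D * Suc m"
        by (rule degree_power_le)
      finally have "degree (smult a (D ^ Suc m)) \<le> Suc m"
        using \<kappa>_nonzero by (simp add: D_def)
      moreover have "degree (N * H) = 2 + 2 * m"
        using H(2,3) N_nonzero degree_N by (subst degree_mult_eq) (auto simp: m_def)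
      ultimately show ?thesis
        unfolding H'_def by (subst degree_add_eq_right) auto
    qed
    ultimately show ?thesis
      using False by (auto simp: m_def)
  qed
qed simp

text \<open>As g has simple poles at 0 and \<infinity>, every nonzero element of C(g) has equal orders at 0
  and \<infinity>, whereas s has orders 1 and -1 there.\<close>
lemma rf_X_notin_gen_subfield: "rf_X \<notin> gen_subfield g"
proof
  assume "rf_X \<in> gen_subfield g"
  then obtain P Q where PQ: "rf_X = rf_poly_comp P g / rf_poly_comp Q g" "rf_poly_comp Q g \<noteq> 0"
    unfolding gen_subfield_def by blast
  then have "P \<noteq> 0" "Q \<noteq> 0"
    by auto
  then obtain HP HQ where
    HP: "rf_poly_comp P g = to_fract HP / to_fract ([:0, \<kappa>:] ^ degree P)"
      "poly HP 0 \<noteq> 0" "degree HP = 2 * degree P" and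
    HQ: "rf_poly_comp Q g = to_fract HQ / to_fract ([:0, \<kappa>:] ^ degree Q)"
      "poly HQ 0 \<noteq> 0" "degree HQ = 2 * degree Q"
    using rf_poly_comp_g by meson
  define m n D where "m = degree P" and "n = degree Q" and "D = [:0, \<kappa>:]"
  have "to_fract D \<noteq> 0"
    using \<kappa>_nonzero by (simp add: D_def)
  have "to_fract D * rf_poly_comp Q g = rconst \<kappa> * rf_poly_comp P g"
    using PQ by (simp add: D_def to_fract_monom_1 field_simps)
  then have "to_fract D * (to_fract HQ / to_fract D ^ n) = rconst \<kappa> * (to_fract HP / to_fract D ^ m)"
    using HP(1) HQ(1) by (simp add: m_def n_def D_def to_fract_power)
  then have "to_fract (HQ * D ^ Suc m) = to_fract (smult \<kappa> HP * D ^ n)"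
    using \<open>to_fract D \<noteq> 0\<close> by (simp add: to_fract_power to_fract_smult field_simps)
  then have eq: "HQ * D ^ Suc m = smult \<kappa> HP * D ^ n"
    by (simp only: to_fract_eq_iff)
  have HP': "poly (smult \<kappa> HP) 0 \<noteq> 0"
    using HP(2) \<kappa>_nonzero by simp
  have "order 0 (HQ * D ^ Suc m) = Suc m" "degree (HQ * D ^ Suc m) = degree HQ + Suc m"
    unfolding D_def using order_degree_mult_power_monom_1[OF HQ(2) \<kappa>_nonzero] by blast+
  moreover have "order 0 (smult \<kappa> HP * D ^ n) = n" "degree (smult \<kappa> HP * D ^ n) = degree HP + n"
    unfolding D_def using order_degree_mult_power_monom_1[OF HP' \<kappa>_nonzero] \<kappa>_nonzero by auto
  ultimately have "Suc m = n" "degree HQ + Suc m = degree HP + n"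
    using eq by metis+
  then show False
    using HP(3) HQ(3) m_def n_def by linarith
qed

lemma rf_X_quadratic_over_g:
  "rf_X * rf_X = ((rconst \<kappa> * g - rconst (coeff N 1)) / rconst (coeff N 2)) * rf_X
                 + (- rconst (coeff N 0) / rconst (coeff N 2))"
proof -
  have "coeff N 2 \<noteq> 0"
    using N_nonzero degree_N by (metis leading_coeff_0_iff)
  moreover have "to_fract N = rconst (coeff N 0) + rconst (coeff N 1) * rf_X
      + rconst (coeff N 2) * (rf_X * rf_X)"
    unfolding to_fract_conv_rf_poly_comp rf_poly_comp_def degree_N
    by (simp add: numeral_2_eq_2 power2_eq_square)
  moreover have "g * (rconst \<kappa> * rf_X) = to_fract N"
    using \<kappa>_nonzero by (simp add: g_def to_fract_monom_1)
  ultimately show ?thesis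
    by (simp add: field_simps)
qed

lemma ext_degree_g: "ext_degree (gen_subfield g) 2"
proof (rule ext_degree_2I)
  interpret subfield "gen_subfield g"
    by (rule subfield_gen_subfield)
  show "quadratic_extension (gen_subfield g) rf_X
    ((rconst \<kappa> * g - rconst (coeff N 1)) / rconst (coeff N 2)) (- rconst (coeff N 0) / rconst (coeff N 2))"
    by unfold_locales (simp_all add: rf_X_notin_gen_subfield rf_X_quadratic_over_g divide_mem
        diff_mem mult_mem uminus_mem rconst_mem_gen_subfield self_mem_gen_subfield)
  show "range rconst \<subseteq> gen_subfield g"
    using rconst_mem_gen_subfield by blast
qed


lemma degree_2_poles_0_inf_g: "degree_2_poles_0_inf g"
  unfolding degree_2_poles_0_inf_def using g_nonzero ext_degree_g divisor_g by blast

end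

section \<open>The parametrization near the node of the curve\<close>

lemma ratfun_with_divisor_0_inf_minus_two:
  assumes "f \<noteq> 0" "Q1 \<notin> {Some 0, None}" "Q2 \<notin> {Some 0, None}"
    and div: "divisor f = (\<lambda>P. pt (Some 0) P + pt None P - pt Q1 P - pt Q2 P)"
  obtains c q where "c \<noteq> 0" "quot_of_fract f = ([:0, c:], q)" "degree q = 2" "poly q 0 \<noteq> 0"
proof -
  obtain p q where pq: "quot_of_fract f = (p, q)"
    by (cases "quot_of_fract f")
  have "p \<noteq> 0" "coprime p q"
    using fst_quot_of_fract_eq_0_iff[of f] coprime_quot_of_fract[of f] pq assms(1) by simp_all
  have order_p_q: "int (order z p) - int (order z q) = (if z = 0 then 1 else 0)
      - (if Q1 = Some z then 1 else 0) - (if Q2 = Some z then 1 else 0)" for z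
    using fun_cong[OF div, of "Some z"] assms(2,3) by (auto simp: divisor_def rf_ord_def pq pt_def)
  have degree_q_p: "int (degree q) - int (degree p) = 1"
    using fun_cong[OF div, of None] assms(2,3) by (auto simp: divisor_def rf_ord_def pq pt_def)
  have root_p: "z = 0 \<and> order z p = 1 \<and> poly q z \<noteq> 0" if "poly p z = 0" for z
  proof -
    have "poly q z \<noteq> 0"
      using coprime_poly_0[OF \<open>coprime p q\<close>] that by blast
    moreover have "order z p \<noteq> 0"
      using that \<open>p \<noteq> 0\<close> order_root by blast
    ultimately show ?thesis
      using order_p_q[of z] order_0I[of q z] by (auto split: if_splits)
  qed
  have "order 0 p \<noteq> 0"
    using order_p_q[of 0] assms(2,3) by auto
  then have roots: "{z. poly p z = 0} = {0}"
    using root_p order_root by blast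
  moreover have "order 0 p = 1"
    using root_p[of 0] roots by blast
  ultimately have p: "p = [:0, lead_coeff p:]"
    using complex_poly_decompose[of p] by simp
  show ?thesis
  proof
    show "lead_coeff p \<noteq> 0" "quot_of_fract f = ([:0, lead_coeff p:], q)"
      using \<open>p \<noteq> 0\<close> pq p by (simp, metis)
    have "degree p = 1"
      using \<open>p \<noteq> 0\<close> by (subst p) simp
    then show "degree q = 2"
      using degree_q_p by linarith
    show "poly q 0 \<noteq> 0"
      using root_p roots by blast
  qed
qed

definition Kpoly_quadratic_part ::
  "real \<Rightarrow> (int \<Rightarrow> int \<Rightarrow> real) \<Rightarrow> complex \<Rightarrow> complex \<Rightarrow> complex" where
  "Kpoly_quadratic_part t d x y =
     x * y - of_real t * (of_real (d 1 (-1)) * x^2 + of_real (d (-1) 1) * y^2)"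

lemma Kpoly_clear_denominators:
  fixes a b X Y :: complex
  assumes "X \<noteq> 0" "Y \<noteq> 0"
  shows "Kpoly t d (a / X) (b / Y) * X^2 * Y^2 = a * b * X * Y - of_real t * (
     of_real (d 1 (-1)) * a^2 * Y^2 + of_real (d (-1) 1) * b^2 * X^2 + of_real (d 1 0) * a^2 * b * Y
     + of_real (d 0 1) * a * b^2 * X + of_real (d 1 1) * a^2 * b^2)"
  using assms by (simp add: Kpoly_def field_simps power2_eq_square)

lemma poly_eq_0_if_cofinite_roots:
  fixes p :: "'a::{idom, ring_char_0} poly"
  assumes "finite A" "\<And>z. z \<notin> A \<Longrightarrow> poly p z = 0"
  shows "p = 0"
proof (rule ccontr)
  assume "p \<noteq> 0"
  then have "finite {z. poly p z = 0}"
    by (rule poly_roots_finite)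
  moreover have "UNIV - A \<subseteq> {z. poly p z = 0}"
    using assms(2) by blast
  ultimately show False
    using assms(1) infinite_UNIV_char_0 by (metis Diff_infinite_finite finite_subset)
qed

text \<open>Near s = 0 the parametrization is (c s / qx(0), c' s / qy(0)) up to O(s^2), so
  (c qy(0) : c' qx(0)) is a tangent direction of the curve at its node (0,0), i.e. a zero of the
  quadratic part of K; at s = \<infinity> the leading coefficients play the same role.\<close>
lemma tangent_directions_at_0_and_inf:
  fixes c c' :: complex and qx qy :: "complex poly"
  assumes "degree qx = 2" "degree qy = 2"
    and on_curve: "\<And>z. z \<noteq> 0 \<Longrightarrow> poly qx z \<noteq> 0 \<Longrightarrow> poly qy z \<noteq> 0 \<Longrightarrow>
      Kpoly t d (c * z / poly qx z) (c' * z / poly qy z) = 0"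
  shows "Kpoly_quadratic_part t d (c * poly qy 0) (c' * poly qx 0) = 0"
    and "Kpoly_quadratic_part t d (c * lead_coeff qy) (c' * lead_coeff qx) = 0"
proof -
  define T d1 d2 d10 d01 d11 where "T = complex_of_real t"
    and "d1 = complex_of_real (d 1 (-1))" and "d2 = complex_of_real (d (-1) 1)"
    and "d10 = complex_of_real (d 1 0)" and "d01 = complex_of_real (d 0 1)"
    and "d11 = complex_of_real (d 1 1)"
  define F where "F = smult (c * c') (qx * qy)
    - smult T (smult (d1 * c^2) (qy * qy) + smult (d2 * c'^2) (qx * qx))"
  define R where "R = smult (d10 * c^2 * c') qy + smult (d01 * c * c'^2) qx
    + smult (d11 * c^2 * c'^2) [:0, 1:]"
  have "qx \<noteq> 0" "qy \<noteq> 0"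
    using assms(1,2) by auto
  then have finite_exceptions: "finite ({0} \<union> {z. poly qx z = 0} \<union> {z. poly qy z = 0})"
    by (simp add: poly_roots_finite)
  have "poly (F - smult T (pCons 0 R)) z = 0"
    if "z \<notin> {0} \<union> {z. poly qx z = 0} \<union> {z. poly qy z = 0}" for z
  proof -
    have "poly qx z \<noteq> 0" "poly qy z \<noteq> 0"
      using that by auto
    then have "Kpoly t d (c * z / poly qx z) (c' * z / poly qy z) * (poly qx z)^2 * (poly qy z)^2
        = poly (F - smult T (pCons 0 R)) z * z^2"
      unfolding F_def R_def T_def d1_def d2_def d10_def d01_def d11_def
      by (subst Kpoly_clear_denominators) (simp_all add: algebra_simps power2_eq_square)
    then show ?thesis
      using that on_curve by simp
  qed
  then have "F - smult T (pCons 0 R) = 0"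
    by (rule poly_eq_0_if_cofinite_roots[OF finite_exceptions])
  then have F: "F = smult T (pCons 0 R)"
    by simp
  have "degree R \<le> 2"
    unfolding R_def using assms(1,2)
    by (intro degree_add_le degree_smult_le[THEN order.trans]) auto
  then have "coeff F 4 = 0"
    by (simp add: F coeff_eq_0 numeral_eq_Suc)
  moreover have "coeff F 4 = Kpoly_quadratic_part t d (c * lead_coeff qy) (c' * lead_coeff qx)"
    using coeff_mult_degree_sum[of qx qy] coeff_mult_degree_sum[of qx qx]
      coeff_mult_degree_sum[of qy qy] assms(1,2)
    by (simp add: F_def Kpoly_quadratic_part_def T_def d1_def d2_def algebra_simps power2_eq_square)
  ultimately show "Kpoly_quadratic_part t d (c * lead_coeff qy) (c' * lead_coeff qx) = 0"
    by simp
  have "poly F 0 = 0"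
    by (simp add: F)
  then show "Kpoly_quadratic_part t d (c * poly qy 0) (c' * poly qx 0) = 0"
    by (simp add: F_def Kpoly_quadratic_part_def T_def d1_def d2_def algebra_simps power2_eq_square)
qed

lemma tangent_direction_constraint:
  assumes "Kpoly_quadratic_part t d u v = 0" "A * v = of_real t * of_real (d 1 (-1)) * u"
    and "u \<noteq> 0" "t \<noteq> 0" "d 1 (-1) \<noteq> 0"
  shows "A - A^2 = (of_real t)^2 * of_real (d 1 (-1)) * of_real (d (-1) 1)"
proof -
  define T d1 d2 where "T = complex_of_real t"
    and "d1 = complex_of_real (d 1 (-1))" and "d2 = complex_of_real (d (-1) 1)"
  have "A * u * (A * v) = T * d1 * A^2 * u^2 + T * d2 * (A * v)^2"
    using assms(1) by (simp add: Kpoly_quadratic_part_def T_def d1_def d2_def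
        algebra_simps power2_eq_square)
  then have "T * d1 * u^2 * A = T * d1 * u^2 * (A^2 + T^2 * d1 * d2)"
    using assms(2) by (simp add: T_def d1_def algebra_simps power2_eq_square)
  moreover have "T * d1 * u^2 \<noteq> 0"
    using assms(3-5) by (simp add: T_def d1_def)
  ultimately have "A = A^2 + T^2 * d1 * d2"
    by simp
  then show ?thesis
    unfolding T_def d1_def d2_def by (metis add_diff_cancel_left')
qed

lemma rf_eval_Some_quot:
  "quot_of_fract f = (p, q) \<Longrightarrow> poly q z \<noteq> 0 \<Longrightarrow> rf_eval f (Some z) = Some (poly p z / poly q z)"
  by (simp add: rf_eval_def)

lemma ratfun_eq_quot: "quot_of_fract f = (p, q) \<Longrightarrow> f = to_fract p / to_fract q"
  using Fract_quot_of_fract[of f] by (simp add: Fract_conv_to_fract)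

lemma Et_closure_transpose: "(X, Y) \<in> Et_closure t d \<longleftrightarrow> (Y, X) \<in> Et_closure t (\<lambda>i j. d j i)"
  by (cases X; cases Y) (auto simp: Et_closure_def Kpoly_def algebra_simps)

text \<open>Applied to the transposed data (y, x, d transposed), this also covers the second function.\<close>
lemma degree_2_poles_0_inf_gamma_tilde:
  fixes x y :: ratfun and A :: complex
  assumes "t \<noteq> 0" "d 1 (-1) \<noteq> 0"
    and A: "A - A^2 \<noteq> (of_real t)^2 * of_real (d 1 (-1)) * of_real (d (-1) 1)"
    and on_curve: "range (\<lambda>s. (rf_eval x s, rf_eval y s)) \<subseteq> Et_closure t d"
    and "x \<noteq> 0" "y \<noteq> 0" "Q1 \<notin> {Some 0, None}" "Q2 \<notin> {Some 0, None}"
    "Q3 \<notin> {Some 0, None}" "Q4 \<notin> {Some 0, None}"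
    and div_x: "divisor x = (\<lambda>P. pt (Some 0) P + pt None P - pt Q1 P - pt Q2 P)"
    and div_y: "divisor y = (\<lambda>P. pt (Some 0) P + pt None P - pt Q3 P - pt Q4 P)"
  shows "degree_2_poles_0_inf (rconst A / x - rconst (of_real (t * d 1 (-1))) / y)"
proof -
  define T d1 where "T = complex_of_real t" and "d1 = complex_of_real (d 1 (-1))"
  obtain c qx where x: "c \<noteq> 0" "quot_of_fract x = ([:0, c:], qx)" "degree qx = 2" "poly qx 0 \<noteq> 0"
    using ratfun_with_divisor_0_inf_minus_two[OF \<open>x \<noteq> 0\<close> _ _ div_x] assms(7,8) by blast
  obtain c' qy where y: "c' \<noteq> 0" "quot_of_fract y = ([:0, c':], qy)" "degree qy = 2" "poly qy 0 \<noteq> 0"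
    using ratfun_with_divisor_0_inf_minus_two[OF \<open>y \<noteq> 0\<close> _ _ div_y] assms(9,10) by blast
  have "Kpoly t d (c * z / poly qx z) (c' * z / poly qy z) = 0"
    if "poly qx z \<noteq> 0" "poly qy z \<noteq> 0" for z
  proof -
    have "(rf_eval x (Some z), rf_eval y (Some z)) \<in> Et_closure t d"
      by (rule subsetD[OF on_curve rangeI])
    then show ?thesis
      using rf_eval_Some_quot[OF x(2) that(1)] rf_eval_Some_quot[OF y(2) that(2)]
      by (simp add: Et_closure_def ac_simps)
  qed
  then have tangent: "Kpoly_quadratic_part t d (c * poly qy 0) (c' * poly qx 0) = 0"
    "Kpoly_quadratic_part t d (c * lead_coeff qy) (c' * lead_coeff qx) = 0"
    using tangent_directions_at_0_and_inf[OF x(3) y(3)] by blast+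
  have not_tangent: "A * v \<noteq> T * d1 * u" if "Kpoly_quadratic_part t d u v = 0" "u \<noteq> 0" for u v
    using tangent_direction_constraint[OF that(1) _ that(2) assms(1,2)] A by (auto simp: T_def d1_def)
  define N where "N = smult (A * c') qx - smult (T * d1 * c) qy"
  have "poly N 0 \<noteq> 0"
    using not_tangent[OF tangent(1)] x(1) y(4) by (simp add: N_def algebra_simps)
  moreover have "degree N = 2"
  proof (rule antisym)
    show "degree N \<le> 2"
      unfolding N_def using x(3) y(3) degree_smult_le[of "A * c'" qx] degree_smult_le[of "T * d1 * c" qy]
      by (intro degree_diff_le) simp_all
    have "qy \<noteq> 0"
      using y(3) by auto
    then have "lead_coeff qy \<noteq> 0"
      by simp
    then have "coeff N 2 \<noteq> 0"
      using not_tangent[OF tangent(2)] x(1,3) y(3) by (simp add: N_def algebra_simps)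
    then show "2 \<le> degree N"
      by (rule le_degree)
  qed
  ultimately have "simple_poles_at_0_and_inf N (c * c')"
    using x(1) y(1) by unfold_locales simp_all
  moreover have "rconst A / x - rconst (of_real (t * d 1 (-1))) / y = to_fract N / to_fract [:0, c * c':]"
  proof -
    have "to_fract qx \<noteq> 0" "to_fract qy \<noteq> 0"
      using x(3) y(3) by auto
    then have "rconst A / x - rconst (of_real (t * d 1 (-1))) / y
        = (rconst A * rconst c' * to_fract qx - rconst (T * d1) * rconst c * to_fract qy)
          / (rconst c * rconst c' * rf_X)"
      using x(1) y(1) unfolding ratfun_eq_quot[OF x(2)] ratfun_eq_quot[OF y(2)] to_fract_monom_1
      by (simp add: T_def d1_def field_simps)
    also have "\<dots> = to_fract N / to_fract [:0, c * c':]"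
      by (simp add: N_def to_fract_smult to_fract_monom_1 rconst_mult mult_ac)
    finally show ?thesis .
  qed
  ultimately show ?thesis
    using simple_poles_at_0_and_inf.degree_2_poles_0_inf_g simple_poles_at_0_and_inf.g_def by metis
qed

lemma subfield_if_is_subfield:
  assumes "is_subfield K"
  shows "subfield K"
proof
  show "0 \<in> K" "1 \<in> K"
    using assms unfolding is_subfield_def by blast+
  fix u v
  assume "u \<in> K" "v \<in> K"
  then show "u + v \<in> K" "u * v \<in> K"
    using assms unfolding is_subfield_def by blast+
  show "- u \<in> K"
    using \<open>u \<in> K\<close> assms unfolding is_subfield_def by (metis diff_0)
  show "inverse u \<in> K"
    using \<open>u \<in> K\<close> assms unfolding is_subfield_def by (metis inverse_zero)
qed

lemma subfield_base_field: "subfield (base_field k d a b)"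
proof (rule subfield_if_is_subfield)
  show "is_subfield (base_field k d a b)"
    unfolding base_field_def is_subfield_def gen_field_def by auto
qed

lemma base_field_generators:
  assumes "(i, j) \<in> step_set k"
  shows "complex_of_real (d i j) \<in> base_field k d a b"
    and "complex_of_real a \<in> base_field k d a b" "complex_of_real b \<in> base_field k d a b"
  using assms unfolding base_field_def gen_field_def by force+

lemma transcendental_no_quadratic_relation:
  assumes "transcendental_over F T" "subfield F"
    and "C \<in> F" "e \<in> F" "e \<noteq> 0"
  shows "C - C^2 \<noteq> T^2 * e"
proof
  interpret subfield F by (fact assms(2))
  assume "C - C^2 = T^2 * e"
  then have "poly [:C^2 - C, 0, e:] T = 0"
    by (simp add: algebra_simps power2_eq_square)
  moreover have "coeff [:C^2 - C, 0, e:] i \<in> F" for i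
    using assms(3,4) by (cases i) (simp_all add: diff_mem mult_mem power2_eq_square coeff_pCons
        split: nat.split)
  moreover have "[:C^2 - C, 0, e:] \<noteq> 0"
    using assms(5) by simp
  ultimately show False
    using assms(1) unfolding transcendental_over_def algebraic_over_def by blast
qed

lemma admissible_weights_antidiagonal_pos:
  assumes "admissible_weights k d"
  shows "d 1 (-1) > 0" "d (-1) 1 > 0"
proof -
  have "(1, -1) \<in> step_set k" "(-1, 1) \<in> step_set k"
    by (auto simp: step_set_def)
  then show "d 1 (-1) > 0" "d (-1) 1 > 0"
    using assms unfolding admissible_weights_def by blast+
qed

lemma boltzmann_weight_nondegenerate:
  assumes "admissible_weights k d" "transcendental_over (base_field k d a b) (of_real t)"
  shows "of_real (1 - 1 / a) - (of_real (1 - 1 / a))^2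
      \<noteq> (of_real t)^2 * of_real (d 1 (-1)) * complex_of_real (d (-1) 1)"
    and "of_real (1 - 1 / b) - (of_real (1 - 1 / b))^2
      \<noteq> (of_real t)^2 * of_real (d (-1) 1) * complex_of_real (d 1 (-1))"
proof -
  interpret F: subfield "base_field k d a b"
    by (rule subfield_base_field)
  have "(1, -1) \<in> step_set k" "(-1, 1) \<in> step_set k"
    by (auto simp: step_set_def)
  then have e: "of_real (d 1 (-1)) * of_real (d (-1) 1) \<in> base_field k d a b"
    "complex_of_real (d 1 (-1)) * of_real (d (-1) 1) \<noteq> 0"
    using admissible_weights_antidiagonal_pos[OF assms(1)] by (auto intro: F.mult_mem base_field_generators(1))
  have "of_real (1 - 1 / a) \<in> base_field k d a b" "of_real (1 - 1 / b) \<in> base_field k d a b"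
    using base_field_generators(2,3)[OF \<open>(1, -1) \<in> step_set k\<close>]
    by (simp_all add: F.diff_mem F.divide_mem)
  then show "of_real (1 - 1 / a) - (of_real (1 - 1 / a))^2
      \<noteq> (of_real t)^2 * of_real (d 1 (-1)) * complex_of_real (d (-1) 1)"
    and "of_real (1 - 1 / b) - (of_real (1 - 1 / b))^2
      \<noteq> (of_real t)^2 * of_real (d (-1) 1) * complex_of_real (d 1 (-1))"
    using transcendental_no_quadratic_relation[OF assms(2) subfield_base_field _ e] by (simp_all add: mult_ac)
qed

theorem proposition1p4:
  fixes k :: nat and d :: "int \<Rightarrow> int \<Rightarrow> real" and a b t :: real
    and x y :: ratfun and Q1 Q2 Q3 Q4 :: "complex option"
  assumes model: "admissible_weights k d"
    and ab: "a > 0" "b > 0"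
    and t01: "0 < t" "t < 1"
    and t_transc: "transcendental_over (base_field k d a b) (complex_of_real t)"
    and x_coeffs: "coeffs_in (alg_closure (gen_field (base_field k d a b \<union> {complex_of_real t}))) x"
    and y_coeffs: "coeffs_in (alg_closure (gen_field (base_field k d a b \<union> {complex_of_real t}))) y"
    and onto: "(\<lambda>s. (rf_eval x s, rf_eval y s)) ` UNIV = Et_closure t d"
    and bij: "\<And>s1 s2. (rf_eval x s1, rf_eval y s1) = (rf_eval x s2, rf_eval y s2) \<Longrightarrow>
                 s1 = s2 \<or> {s1, s2} = {Some 0, None}"
    and at0: "(rf_eval x (Some 0), rf_eval y (Some 0)) = (Some 0, Some 0)"
    and atinf: "(rf_eval x None, rf_eval y None) = (Some 0, Some 0)"
    and x_nz: "x \<noteq> 0" and y_nz: "y \<noteq> 0"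
    and Q_ne: "\<forall>Q\<in>{Q1, Q2, Q3, Q4}. Q \<noteq> Some 0 \<and> Q \<noteq> None"
    and div_x: "divisor x = (\<lambda>P. pt (Some 0) P + pt None P - pt Q1 P - pt Q2 P)"
    and div_y: "divisor y = (\<lambda>P. pt (Some 0) P + pt None P - pt Q3 P - pt Q4 P)"
  shows "let A = 1 - 1 / a; B = 1 - 1 / b;
             g1 = rconst (complex_of_real A) / x - rconst (complex_of_real (t * d 1 (-1))) / y;
             g2 = rconst (complex_of_real B) / y - rconst (complex_of_real (t * d (-1) 1)) / x
         in ext_degree (gen_subfield g1) 2 \<and> ext_degree (gen_subfield g2) 2 \<and>
            (\<exists>P1 P2 P3 P4. (\<forall>P\<in>{P1, P2, P3, P4}. P \<noteq> Some 0 \<and> P \<noteq> None) \<and>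
               g1 \<noteq> 0 \<and> g2 \<noteq> 0 \<and>
               divisor g1 = (\<lambda>P. pt P1 P + pt P2 P - pt (Some 0) P - pt None P) \<and>
               divisor g2 = (\<lambda>P. pt P3 P + pt P4 P - pt (Some 0) P - pt None P))"
proof -
  have "t \<noteq> 0" "d 1 (-1) \<noteq> 0" "d (-1) 1 \<noteq> 0"
    using t01 admissible_weights_antidiagonal_pos[OF model] by simp_all
  have on_curve: "range (\<lambda>s. (rf_eval x s, rf_eval y s)) \<subseteq> Et_closure t d"
    using onto by simp
  then have on_curve_transposed: "range (\<lambda>s. (rf_eval y s, rf_eval x s)) \<subseteq> Et_closure t (\<lambda>i j. d j i)"
    using Et_closure_transpose by blast
  have Q: "Q1 \<notin> {Some 0, None}" "Q2 \<notin> {Some 0, None}" "Q3 \<notin> {Some 0, None}" "Q4 \<notin> {Some 0, None}"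
    using Q_ne by simp_all
  define \<gamma>1 \<gamma>2 where "\<gamma>1 = rconst (of_real (1 - 1 / a)) / x - rconst (of_real (t * d 1 (-1))) / y"
    and "\<gamma>2 = rconst (of_real (1 - 1 / b)) / y - rconst (of_real (t * d (-1) 1)) / x"
  have "degree_2_poles_0_inf \<gamma>1"
    unfolding \<gamma>1_def
    by (rule degree_2_poles_0_inf_gamma_tilde[of t d, OF \<open>t \<noteq> 0\<close> \<open>d 1 (-1) \<noteq> 0\<close>
          boltzmann_weight_nondegenerate(1)[OF model t_transc] on_curve x_nz y_nz Q div_x div_y])
  moreover have "degree_2_poles_0_inf \<gamma>2"
    unfolding \<gamma>2_def
    by (rule degree_2_poles_0_inf_gamma_tilde[of t "\<lambda>i j. d j i", OF \<open>t \<noteq> 0\<close> \<open>d (-1) 1 \<noteq> 0\<close>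
          boltzmann_weight_nondegenerate(2)[OF model t_transc] on_curve_transposed y_nz x_nz
          Q(3,4,1,2) div_y div_x])
  ultimately obtain P1 P2 P3 P4 where "\<gamma>1 \<noteq> 0" "ext_degree (gen_subfield \<gamma>1) 2"
    "\<gamma>2 \<noteq> 0" "ext_degree (gen_subfield \<gamma>2) 2"
    "P1 \<notin> {Some 0, None}" "P2 \<notin> {Some 0, None}" "P3 \<notin> {Some 0, None}" "P4 \<notin> {Some 0, None}"
    "divisor \<gamma>1 = (\<lambda>P. pt P1 P + pt P2 P - pt (Some 0) P - pt None P)"
    "divisor \<gamma>2 = (\<lambda>P. pt P3 P + pt P4 P - pt (Some 0) P - pt None P)"
    unfolding degree_2_poles_0_inf_def by blast
  then show ?thesis
    unfolding Let_def \<gamma>1_def[symmetric] \<gamma>2_def[symmetric] by simp blast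
qed

end
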